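(* Let $A$ be an invertible $n$-by-$n$ doubly nonnegative matrix with sign change matrix $W=[w_{ij}]$. For indices $i,j$ let $T^-_{ij}=\{t>1:(A^t)_{ij}<0\}$. Then the number of connected components of $T^-_{ij}$ is at most $\lfloor (w_{ij}-1)/2\rfloor$ if $w_{ij}>0$, and is $0$ if $w_{ij}=0$.
   Context: A real matrix is doubly nonnegative if it is symmetric, positive semidefinite, and entry-wise nonnegative. Write $A=UDU^T$ with $U=[u_{ij}]$ real orthogonal and $D=\mathrm{diag}(\lambda_1,\dots,\lambda_n)$, $\lambda_1\ge\cdots\ge\lambda_n$; for real $t$ (here $\lambda_i>0$), $A^t=UD^tU^T$, so $(A^t)_{ij}=\sum_k u_{ik}u_{jk}\lambda_k^t$ is an exponential polynomial in $t$. The sign change matrix $W=[w_{ij}]$ has $w_{ij}$ equal to the number of sign changes in the coefficient sequence $(u_{i1}u_{j1},\dots,u_{in}u_{jn})$, arranged in decreasing order of the corresponding eigenvalues (zeros ignored). *)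

theory Defs
  imports "HOL-Analysis.Analysis"
begin

text \<open>Real n-by-n matrices are represented as functions nat => nat => real,
  only the entries with indices below n being relevant.\<close>

definition symmetric_matrix :: "nat \<Rightarrow> (nat \<Rightarrow> nat \<Rightarrow> real) \<Rightarrow> bool" where
  "symmetric_matrix n A \<longleftrightarrow> (\<forall>i<n. \<forall>j<n. A i j = A j i)"

definition psd_matrix :: "nat \<Rightarrow> (nat \<Rightarrow> nat \<Rightarrow> real) \<Rightarrow> bool" where
  "psd_matrix n A \<longleftrightarrow> symmetric_matrix n A \<and>
     (\<forall>x :: nat \<Rightarrow> real. (\<Sum>i<n. \<Sum>j<n. x i * A i j * x j) \<ge> 0)"

definition entrywise_nonneg :: "nat \<Rightarrow> (nat \<Rightarrow> nat \<Rightarrow> real) \<Rightarrow> bool" where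
  "entrywise_nonneg n A \<longleftrightarrow> (\<forall>i<n. \<forall>j<n. A i j \<ge> 0)"

definition doubly_nonnegative :: "nat \<Rightarrow> (nat \<Rightarrow> nat \<Rightarrow> real) \<Rightarrow> bool" where
  "doubly_nonnegative n A \<longleftrightarrow> symmetric_matrix n A \<and> psd_matrix n A \<and> entrywise_nonneg n A"

definition mat_mult :: "nat \<Rightarrow> (nat \<Rightarrow> nat \<Rightarrow> real) \<Rightarrow> (nat \<Rightarrow> nat \<Rightarrow> real) \<Rightarrow> nat \<Rightarrow> nat \<Rightarrow> real" where
  "mat_mult n A B = (\<lambda>i j. \<Sum>k<n. A i k * B k j)"

definition invertible_matrix :: "nat \<Rightarrow> (nat \<Rightarrow> nat \<Rightarrow> real) \<Rightarrow> bool" where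
  "invertible_matrix n A \<longleftrightarrow> (\<exists>B. \<forall>i<n. \<forall>j<n.
      mat_mult n A B i j = (if i = j then 1 else 0) \<and> mat_mult n B A i j = (if i = j then 1 else 0))"

definition orthogonal_matrix :: "nat \<Rightarrow> (nat \<Rightarrow> nat \<Rightarrow> real) \<Rightarrow> bool" where
  "orthogonal_matrix n U \<longleftrightarrow> (\<forall>i<n. \<forall>j<n.
      (\<Sum>k<n. U k i * U k j) = (if i = j then 1 else 0) \<and>
      (\<Sum>k<n. U i k * U j k) = (if i = j then 1 else 0))"

fun sign_changes_nz :: "real list \<Rightarrow> nat" where
  "sign_changes_nz (x # y # zs) = (if x * y < 0 then 1 else 0) + sign_changes_nz (y # zs)"
| "sign_changes_nz _ = 0"

definition sign_changes :: "real list \<Rightarrow> nat" where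
  "sign_changes xs = sign_changes_nz (filter (\<lambda>x. x \<noteq> 0) xs)"

text \<open>Entry (i,j) of the sign change matrix w.r.t. the decomposition A = U D U^T,
  where the eigenvalues lambda 0 >= ... >= lambda (n-1) are in decreasing order.\<close>
definition sign_change_entry :: "nat \<Rightarrow> (nat \<Rightarrow> nat \<Rightarrow> real) \<Rightarrow> nat \<Rightarrow> nat \<Rightarrow> nat" where
  "sign_change_entry n U i j = sign_changes (map (\<lambda>k. U i k * U j k) [0..<n])"

text \<open>Entry (i,j) of A^t = U D^t U^T.\<close>
definition mat_real_power_entry ::
  "nat \<Rightarrow> (nat \<Rightarrow> nat \<Rightarrow> real) \<Rightarrow> (nat \<Rightarrow> real) \<Rightarrow> real \<Rightarrow> nat \<Rightarrow> nat \<Rightarrow> real" where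
  "mat_real_power_entry n U lam t i j = (\<Sum>k<n. U i k * U j k * lam k powr t)"

end

theory Submission
  imports Defs
begin

text \<open>With \<open>\<mu> k = ln (lam k)\<close>, the entry \<open>(A\<^sup>t)\<^sub>i\<^sub>j\<close> is the exponential sum
  \<open>f t = (\<Sum>k. U i k * U j k * exp (\<mu> k * t))\<close>, and Descartes' rule of signs for such sums
  (Rolle's theorem after dividing by a suitable exponential) bounds its number of real zeros by the
  number \<open>w\<close> of sign changes of its coefficients, unless \<open>f = 0\<close>. For \<open>i \<noteq> j\<close> we have
  \<open>f 0 = 0\<close>, and \<open>f m \<ge> 0\<close> for all integers \<open>m \<ge> 1\<close> because \<open>A\<^sup>m\<close> is entrywise nonnegative.
  Suppose \<open>{t. t > 1 \<and> f t < 0}\<close> has \<open>c\<close> components. Adding \<open>\<epsilon> h\<close> with \<open>h 0 = 0\<close> and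
  \<open>h > 0\<close> on \<open>{t. t > 0}\<close>, chosen so that the number of sign changes grows at most to the next
  even number, gives a sum that vanishes at \<open>0\<close>, is negative at a point of each component, and
  positive at \<open>1\<close>, between the components and at a large integer. It has at least \<open>2c + 1\<close> zeros,
  so \<open>2c + 1\<close> is at most \<open>w\<close> rounded up to an even number, i.e. \<open>c \<le> (w - 1) div 2\<close>.\<close>

section \<open>Sign changes\<close>

fun sign_changes_from :: "real \<Rightarrow> real list \<Rightarrow> nat" where
  "sign_changes_from s [] = 0"
| "sign_changes_from s (x # xs) =
     (if x = 0 then sign_changes_from s xs
      else (if s * x < 0 then 1 else 0) + sign_changes_from x xs)"

fun last_nonzero :: "real \<Rightarrow> real list \<Rightarrow> real" where
  "last_nonzero s [] = s"
| "last_nonzero s (x # xs) = last_nonzero (if x = 0 then s else x) xs"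

text \<open>\<open>sign_changes_from s xs\<close> counts the sign changes of \<open>s # xs\<close> with zeros ignored, and
  \<open>last_nonzero s xs\<close> is the last nonzero entry of \<open>s # xs\<close>; the seed \<open>s = 0\<close> means that
  no sign has been seen yet.\<close>

lemma sign_changes_from_nonzero:
  "s \<noteq> 0 \<Longrightarrow> sign_changes_from s xs = sign_changes_nz (s # filter (\<lambda>x. x \<noteq> 0) xs)"
  by (induction xs arbitrary: s) auto

lemma sign_changes_from_0: "sign_changes_from 0 xs = sign_changes xs"
  unfolding sign_changes_def by (induction xs) (auto simp: sign_changes_from_nonzero)

lemma sign_changes_from_append:
  "sign_changes_from s (xs @ ys) = sign_changes_from s xs + sign_changes_from (last_nonzero s xs) ys"
  by (induction xs arbitrary: s) auto

lemma mult_less_0_iff_sgn: "a * b < (0::real) \<longleftrightarrow> sgn a * sgn b < 0"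
  by (auto simp: sgn_if mult_less_0_iff)

abbreviation same_signs :: "real list \<Rightarrow> real list \<Rightarrow> bool" where
  "same_signs \<equiv> list_all2 (\<lambda>a b. sgn a = sgn b)"

lemma sign_changes_from_same_signs:
  "same_signs xs ys \<Longrightarrow> sgn s = sgn s' \<Longrightarrow> sign_changes_from s xs = sign_changes_from s' ys"
proof (induction xs ys arbitrary: s s' rule: list_all2_induct)
  case (Cons x xs y ys)
  then have "x = 0 \<longleftrightarrow> y = 0" "s * x < 0 \<longleftrightarrow> s' * y < 0"
    by (metis sgn_eq_0_iff, simp add: mult_less_0_iff_sgn[of s] mult_less_0_iff_sgn[of s'])
  with Cons show ?case by auto
qed simp

lemma last_nonzero_same_signs:
  "same_signs xs ys \<Longrightarrow> sgn s = sgn s' \<Longrightarrow> sgn (last_nonzero s xs) = sgn (last_nonzero s' ys)"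
proof (induction xs ys arbitrary: s s' rule: list_all2_induct)
  case (Cons x xs y ys)
  then have "x = 0 \<longleftrightarrow> y = 0" by (metis sgn_eq_0_iff)
  with Cons show ?case
    by (cases "x = 0") (simp_all add: Cons.IH[of s s'] Cons.IH[of x y])
qed simp

lemma sign_changes_from_sgn_cong: "sgn s = sgn s' \<Longrightarrow> sign_changes_from s xs = sign_changes_from s' xs"
  by (rule sign_changes_from_same_signs) (auto simp: list_all2_refl)

lemma sign_changes_from_uminus: "sign_changes_from (-s) (map uminus xs) = sign_changes_from s xs"
  by (induction xs arbitrary: s) (auto simp: mult.commute)

lemma sign_changes_from_seed_le:
  "x \<noteq> 0 \<Longrightarrow> sign_changes_from s ys \<le> sign_changes_from x ys + (if s * x < 0 then 1 else 0)"
proof (induction ys arbitrary: s x)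
  case (Cons y ys)
  have "s * x < 0 \<or> x * y < 0" if "s * y < 0" "y \<noteq> 0"
  proof (rule ccontr)
    assume "\<not> (s * x < 0 \<or> x * y < 0)"
    then have "0 \<le> (s * x) * (x * y)" by simp
    moreover have "(s * x) * (x * y) = (s * y) * (x * x)" by (simp add: algebra_simps)
    moreover have "(s * y) * (x * x) < 0"
      using \<open>s * y < 0\<close> \<open>x \<noteq> 0\<close> by (metis mult_neg_pos not_real_square_gt_zero)
    ultimately show False by linarith
  qed
  with Cons show ?case by auto
qed simp

lemma sign_changes_from_le_Suc_0: "sign_changes_from s ys \<le> Suc (sign_changes_from 0 ys)"
  by (induction ys arbitrary: s) auto

lemma sign_changes_from_Cons_ge: "sign_changes_from s ys \<le> sign_changes_from s (x # ys)"
  using sign_changes_from_seed_le[of x s ys] by auto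

lemma sign_changes_from_merge:
  "sign_changes_from s ((a + b) # ys) \<le> sign_changes_from s (a # b # ys)"
proof -
  have "a + b = 0 \<or> (a + b \<noteq> 0 \<and> sgn (a + b) = sgn a) \<or> (a + b \<noteq> 0 \<and> sgn (a + b) = sgn b)"
    by (auto simp: sgn_if split: if_splits)
  then consider "a + b = 0" | "a + b \<noteq> 0" "sgn (a + b) = sgn a" | "a + b \<noteq> 0" "sgn (a + b) = sgn b"
    by blast
  then show ?thesis
  proof cases
    case 1
    then show ?thesis
      using sign_changes_from_Cons_ge[of s ys b] sign_changes_from_Cons_ge[of s "b # ys" a] by simp
  next
    case 2
    then have "a \<noteq> 0" by (auto simp: sgn_eq_0_iff)
    with 2 show ?thesis
      using sign_changes_from_sgn_cong[OF 2(2), of ys] sign_changes_from_Cons_ge[of a ys b]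
        mult_less_0_iff_sgn[of s "a + b"] mult_less_0_iff_sgn[of s a] by simp
  next
    case 3
    then have "b \<noteq> 0" by (auto simp: sgn_eq_0_iff)
    with 3 have "sign_changes_from s ((a + b) # ys) = sign_changes_from s (b # ys)"
      using sign_changes_from_sgn_cong[OF 3(2), of ys]
        mult_less_0_iff_sgn[of s "a + b"] mult_less_0_iff_sgn[of s b] by simp
    then show ?thesis using sign_changes_from_Cons_ge[of s "b # ys" a] by simp
  qed
qed

lemma sign_changes_from_first_change:
  assumes "sign_changes_from s (map fst xs) \<noteq> 0"
  obtains as p bs where "xs = as @ p # bs" "fst p \<noteq> 0" "last_nonzero s (map fst as) * fst p < 0"
  using assms
proof (induction xs arbitrary: s)
  case (Cons x xs)
  show ?case
  proof (cases "fst x \<noteq> 0 \<and> s * fst x < 0")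
    case True
    then show ?thesis using Cons.prems(1)[of "[]"] by simp
  next
    case False
    let ?s = "if fst x = 0 then s else fst x"
    have "sign_changes_from ?s (map fst xs) \<noteq> 0" using Cons.prems(2) False by auto
    then show ?thesis
    proof (rule Cons.IH[of ?s, rotated])
      fix as p bs
      assume "xs = as @ p # bs" "fst p \<noteq> 0" "last_nonzero ?s (map fst as) * fst p < 0"
      then show thesis using Cons.prems(1)[of "x # as" p bs] by simp
    qed
  qed
qed simp

lemma sign_changes_from_eq_0_same_sign:
  "sign_changes_from s cs = 0 \<Longrightarrow> s \<noteq> 0 \<Longrightarrow> c \<in> set cs \<Longrightarrow> 0 \<le> s * c"
proof (induction cs arbitrary: s)
  case (Cons x xs)
  show ?case
  proof (cases "x = 0")
    case False
    with Cons.prems have "0 \<le> s * x" "sign_changes_from x xs = 0" by (auto split: if_splits)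
    moreover have "0 \<le> s * c" if "0 \<le> s * x" "0 \<le> x * c"
    proof -
      have "0 \<le> (s * c) * (x * x)" using that by (metis mult.assoc mult.left_commute mult_nonneg_nonneg)
      then show ?thesis
        using \<open>x \<noteq> 0\<close> by (metis linorder_not_le mult_neg_pos not_real_square_gt_zero)
    qed
    ultimately show ?thesis using Cons False by auto
  qed (use Cons in auto)
qed simp

lemma sign_changes_eq_0_same_sign:
  "sign_changes cs = 0 \<Longrightarrow> \<exists>s. s \<noteq> 0 \<and> (\<forall>c\<in>set cs. 0 \<le> s * c)"
  unfolding sign_changes_from_0[symmetric]
proof (induction cs)
  case (Cons x xs)
  show ?case
  proof (cases "x = 0")
    case False
    with Cons.prems show ?thesis
      using sign_changes_from_eq_0_same_sign[of x xs] by (intro exI[of _ x]) auto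
  qed (use Cons in auto)
qed (auto intro: exI[of _ 1])

lemma last_nonzero_nonzero: "s \<noteq> 0 \<Longrightarrow> last_nonzero s cs \<noteq> 0"
  by (induction cs arbitrary: s) auto

lemma last_nonzero_in: "last_nonzero s cs \<in> insert s (set cs)"
  by (induction cs arbitrary: s) auto

lemma last_nonzero_seed_irrelevant: "\<exists>c\<in>set cs. c \<noteq> 0 \<Longrightarrow> last_nonzero s cs = last_nonzero t cs"
  by (induction cs arbitrary: s t) auto

lemma even_sign_changes_from_iff:
  "s \<noteq> 0 \<Longrightarrow> even (sign_changes_from s cs) \<longleftrightarrow> 0 < last_nonzero s cs * s"
proof (induction cs arbitrary: s)
  case Nil
  then show ?case by (auto simp: zero_less_mult_iff linorder_neq_iff)
next
  case (Cons x xs)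
  show ?case
  proof (cases "x = 0")
    case False
    let ?L = "last_nonzero x xs"
    have "?L \<noteq> 0" using last_nonzero_nonzero False by auto
    then have "0 < ?L * s \<longleftrightarrow> (0 < ?L * x \<longleftrightarrow> 0 < s * x)"
      using Cons.prems False by (auto simp: zero_less_mult_iff)
    moreover have "s * x < 0 \<longleftrightarrow> \<not> 0 < s * x"
      using Cons.prems False by (auto simp: zero_less_mult_iff mult_less_0_iff)
    ultimately show ?thesis using Cons.IH[OF False] False by auto
  qed (use Cons in auto)
qed

lemma sign_changes_from_flip:
  assumes pos: "\<forall>r\<in>set as. 0 < f r" and neg: "\<forall>r\<in>set (p # bs). f r < 0"
    and p: "fst p \<noteq> 0" and change: "last_nonzero 0 (map fst as) * fst p < 0"
  shows "Suc (sign_changes_from 0 (map (\<lambda>r. fst r * f r) (as @ p # bs)))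
    = sign_changes_from 0 (map fst (as @ p # bs))"
proof -
  define as' where "as' = map (\<lambda>r. fst r * f r) as"
  define p' where "p' = fst p * f p"
  define bs' where "bs' = map (\<lambda>r. fst r * f r) bs"
  have "f p < 0" using neg by simp
  have same_as: "same_signs as' (map fst as)"
    unfolding as'_def list_all2_map1 list_all2_map2
    by (rule list.rel_refl_strong) (use pos in \<open>auto simp: sgn_mult\<close>)
  have same_bs: "same_signs (map uminus bs') (map fst bs)"
    unfolding bs'_def list_all2_map1 list_all2_map2
    by (rule list.rel_refl_strong) (use neg in \<open>auto simp: sgn_mult\<close>)
  have sgn_p': "sgn (- p') = sgn (fst p)" and "p' \<noteq> 0"
    using \<open>f p < 0\<close> p by (auto simp: p'_def sgn_mult)
  then have "sgn (fst p) = - sgn p'" by (simp add: sgn_minus)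
  then have "sgn (last_nonzero 0 as' * p') = - sgn (last_nonzero 0 (map fst as) * fst p)"
    using last_nonzero_same_signs[OF same_as, of 0 0] by (simp add: sgn_mult)
  then have "sgn (last_nonzero 0 as' * p') = 1" using sgn_neg[OF change] by simp
  then have "\<not> last_nonzero 0 as' * p' < 0" by (simp add: sgn_1_pos)
  then have "sign_changes_from (last_nonzero 0 as') (p' # bs') = sign_changes_from (fst p) (map fst bs)"
    using \<open>p' \<noteq> 0\<close> sign_changes_from_uminus[of p' bs'] sign_changes_from_same_signs[OF same_bs sgn_p']
    by simp
  moreover have "sign_changes_from 0 as' = sign_changes_from 0 (map fst as)"
    using sign_changes_from_same_signs[OF same_as] by simp
  ultimately show ?thesis
    using change p by (simp add: as'_def p'_def bs'_def sign_changes_from_append)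
qed

lemma sign_changes_from_append_opposite:
  assumes "last_nonzero 0 cs \<le> 0" "0 < \<epsilon>"
  shows "sign_changes_from 0 (cs @ [- \<epsilon>]) = sign_changes_from 0 cs"
  using assms mult_nonpos_nonneg[OF assms(1), of \<epsilon>] by (simp add: sign_changes_from_append)

lemma sign_changes_from_Cons_positive:
  assumes "0 < last_nonzero 0 cs" "0 < \<epsilon>"
  shows "sign_changes_from 0 (\<epsilon> # cs) \<le> 2 * ((sign_changes_from 0 cs + 1) div 2)"
proof -
  have "last_nonzero 0 cs \<in> insert 0 (set cs)" by (rule last_nonzero_in)
  then have "\<exists>c\<in>set cs. c \<noteq> 0" using assms(1) by (auto intro!: bexI[of _ "last_nonzero 0 cs"])
  then have "last_nonzero 1 cs = last_nonzero 0 cs" by (rule last_nonzero_seed_irrelevant)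
  then have "even (sign_changes_from 1 cs)"
    using even_sign_changes_from_iff[of 1 cs] assms(1) by simp
  moreover have "sign_changes_from 0 (\<epsilon> # cs) = sign_changes_from 1 cs"
    using sign_changes_from_sgn_cong[of \<epsilon> 1 cs] assms(2) by simp
  moreover have "sign_changes_from 1 cs \<le> Suc (sign_changes_from 0 cs)"
    by (rule sign_changes_from_le_Suc_0)
  ultimately show ?thesis by presburger
qed

lemma same_signs_list_update:
  "k < length cs \<Longrightarrow> sgn c = sgn (cs ! k) \<Longrightarrow> same_signs (cs[k := c]) cs"
  by (auto simp: list_all2_conv_all_nth nth_list_update)

section \<open>Exponential sums and Descartes' rule of signs\<close>

definition exp_sum :: "(real \<times> real) list \<Rightarrow> real \<Rightarrow> real" where
  "exp_sum xs t = (\<Sum>p\<leftarrow>xs. fst p * exp (snd p * t))"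

lemma exp_sum_simps [simp]:
  "exp_sum [] t = 0"
  "exp_sum (p # xs) t = fst p * exp (snd p * t) + exp_sum xs t"
  "exp_sum (xs @ ys) t = exp_sum xs t + exp_sum ys t"
  by (simp_all add: exp_sum_def)

lemma exp_sum_at_0: "exp_sum xs 0 = sum_list (map fst xs)"
  by (simp add: exp_sum_def)

lemma exp_sum_list_update:
  "k < length xs \<Longrightarrow>
    exp_sum (xs[k := q]) t = exp_sum xs t - fst (xs ! k) * exp (snd (xs ! k) * t) + fst q * exp (snd q * t)"
  by (induction xs arbitrary: k) (auto split: nat.split)

lemma has_real_derivative_exp_sum:
  "(exp_sum xs has_real_derivative exp_sum (map (\<lambda>p. (fst p * snd p, snd p)) xs) t) (at t)"
proof (induction xs)
  case Nil
  then show ?case by (simp add: exp_sum_def)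
next
  case (Cons p xs)
  have "exp_sum (p # xs) = (\<lambda>t. fst p * exp (snd p * t) + exp_sum xs t)" by auto
  then show ?case using Cons by (auto intro!: derivative_eq_intros)
qed

lemma continuous_on_exp_sum: "continuous_on S (exp_sum xs)"
  by (meson DERIV_continuous continuous_at_imp_continuous_on has_real_derivative_exp_sum)

lemma exp_sum_shift: "exp_sum xs t = exp (m * t) * exp_sum (map (\<lambda>p. (fst p, snd p - m)) xs) t"
  by (induction xs) (auto simp: algebra_simps exp_add[symmetric])

lemma exp_sum_zero_coeffs: "\<forall>p\<in>set xs. fst p = 0 \<Longrightarrow> exp_sum xs t = 0"
  by (induction xs) auto

lemma exp_sum_eq_0_if_same_sign:
  assumes "s \<noteq> 0" "\<forall>c\<in>set (map fst xs). 0 \<le> s * c" "exp_sum xs z = 0"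
  shows "exp_sum xs t = 0"
proof -
  let ?terms = "map (\<lambda>p. s * fst p * exp (snd p * z)) xs"
  have "sum_list ?terms = s * exp_sum xs z"
    unfolding exp_sum_def sum_list_const_mult[symmetric] by (simp add: mult.assoc)
  then have "sum_list ?terms = 0" using assms(3) by simp
  moreover have "\<And>x. x \<in> set ?terms \<Longrightarrow> 0 \<le> x" using assms(2) by auto
  ultimately have "\<forall>x\<in>set ?terms. x = 0" using sum_list_nonneg_eq_0_iff[of ?terms] by blast
  then show ?thesis using assms(1) by (intro exp_sum_zero_coeffs) auto
qed

lemma roots_of_derivative:
  assumes deriv: "\<And>t. (g has_real_derivative g' t) (at t)"
  shows "finite Z \<Longrightarrow> card Z = Suc N \<Longrightarrow> \<forall>z\<in>Z. g z = 0 \<Longrightarrow>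
    \<exists>Z'. finite Z' \<and> card Z' = N \<and> (\<forall>z\<in>Z'. g' z = 0) \<and> (\<forall>z\<in>Z'. z < Max Z)"
proof (induction N arbitrary: Z)
  case 0
  then show ?case by (intro exI[of _ "{}"]) auto
next
  case (Suc N)
  define M where "M = Max Z"
  define Z0 where "Z0 = Z - {M}"
  have "M \<in> Z" using Suc.prems M_def by (metis Max_in card.empty nat.distinct(1))
  then have Z0: "finite Z0" "card Z0 = Suc N" using Suc.prems Z0_def by auto
  then have "Z0 \<noteq> {}" by auto
  obtain Z0' where Z0': "finite Z0'" "card Z0' = N" "\<forall>z\<in>Z0'. g' z = 0" "\<forall>z\<in>Z0'. z < Max Z0"
    using Suc.IH[OF Z0(1,2)] Suc.prems(3) Z0_def by auto
  define m where "m = Max Z0"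
  have "m \<in> Z0" using Z0 \<open>Z0 \<noteq> {}\<close> m_def by simp
  then have "m \<le> M" "m \<noteq> M" "g m = 0" "g M = 0"
    using Suc.prems \<open>M \<in> Z\<close> Z0_def M_def by auto
  then have "m < M" "g m = g M" by auto
  then have "\<exists>\<xi>. m < \<xi> \<and> \<xi> < M \<and> (g has_real_derivative 0) (at \<xi>)"
    using deriv by (intro Rolle) (auto intro: DERIV_continuous continuous_at_imp_continuous_on
        simp: real_differentiable_def)
  then obtain \<xi> where \<xi>: "m < \<xi>" "\<xi> < M" "(g has_real_derivative 0) (at \<xi>)" by blast
  have "g' \<xi> = 0" using DERIV_unique[OF deriv \<xi>(3)] .
  moreover have "\<xi> \<notin> Z0'" using Z0'(4) \<xi>(1) m_def by force
  ultimately show ?case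
    using Z0' \<xi> \<open>m < M\<close> m_def M_def by (intro exI[of _ "insert \<xi> Z0'"]) force
qed

lemma exp_sum_descartes_step:
  assumes sorted: "sorted_wrt (\<ge>) (map snd xs)"
    and changes: "sign_changes (map fst xs) \<noteq> 0"
    and Z: "finite Z" "Z \<noteq> {}" "\<forall>z\<in>Z. exp_sum xs z = 0"
  obtains ys Z' where "sorted_wrt (\<ge>) (map snd ys)"
    "length ys + sign_changes (map fst ys) < length xs + sign_changes (map fst xs)"
    "sign_changes (map fst ys) + card Z \<le> sign_changes (map fst xs) + card Z'"
    "finite Z'" "\<forall>z\<in>Z'. exp_sum ys z = 0"
    "(\<forall>t. exp_sum ys t = 0) \<longrightarrow> (\<forall>t. exp_sum xs t = 0)"
proof -
  have "sign_changes_from 0 (map fst xs) \<noteq> 0" using changes by (simp add: sign_changes_from_0)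
  then obtain as p bs where split: "xs = as @ p # bs" "fst p \<noteq> 0"
    and change: "last_nonzero 0 (map fst as) * fst p < 0"
    by (rule sign_changes_from_first_change)
  then obtain as0 q where "as = as0 @ [q]" by (cases as rule: rev_cases) auto
  with split have xs: "xs = as0 @ q # p # bs" by simp
  have "snd p \<le> snd q" using sorted unfolding xs by (simp add: sorted_wrt_append)
  then consider "snd q = snd p" | "snd p < snd q" by linarith
  then show thesis
  proof cases
    case 1
    define ys where "ys = as0 @ (fst q + fst p, snd p) # bs"
    have "exp_sum ys = exp_sum xs" using 1 by (auto simp: xs ys_def algebra_simps)
    moreover have "sign_changes (map fst ys) \<le> sign_changes (map fst xs)"
      using sign_changes_from_merge[of _ "fst q" "fst p" "map fst bs"]
      by (simp add: xs ys_def sign_changes_from_0[symmetric] sign_changes_from_append)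
    moreover have "sorted_wrt (\<ge>) (map snd ys)"
      using sorted 1 by (simp add: xs ys_def sorted_wrt_append)
    ultimately show thesis using Z by (intro that[of ys Z]) (auto simp: xs ys_def)
  next
    case 2
    \<comment> \<open>Rolle step: divide by \<open>exp (\<mu> t)\<close> for an exponent \<open>\<mu>\<close> separating \<open>q\<close> from \<open>p\<close>,
      then differentiate; this removes the sign change at \<open>p\<close> and one zero\<close>
    define \<mu> where "\<mu> = (snd q + snd p) / 2"
    define xs\<mu> where "xs\<mu> = map (\<lambda>r. (fst r, snd r - \<mu>)) xs"
    define ys where "ys = map (\<lambda>r. (fst r * snd r, snd r)) xs\<mu>"
    have above: "\<forall>r\<in>set as. 0 < snd r - \<mu>" and below: "\<forall>r\<in>set (p # bs). snd r - \<mu> < 0"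
      using sorted 2 unfolding xs \<open>as = as0 @ [q]\<close> \<mu>_def by (auto simp: sorted_wrt_append)
    have zeros: "\<forall>z\<in>Z. exp_sum xs\<mu> z = 0" using Z(3) exp_sum_shift[of xs _ \<mu>] xs\<mu>_def by simp
    obtain N where N: "card Z = Suc N" using Z by (metis card_gt_0_iff gr0_implies_Suc)
    obtain Z' where Z': "finite Z'" "card Z' = N" "\<forall>z\<in>Z'. exp_sum ys z = 0"
      using roots_of_derivative[OF has_real_derivative_exp_sum Z(1) N zeros] ys_def by blast
    have "map fst ys = map (\<lambda>r. fst r * (snd r - \<mu>)) xs" by (simp add: ys_def xs\<mu>_def)
    then have "Suc (sign_changes (map fst ys)) = sign_changes (map fst xs)"
      using sign_changes_from_flip[OF above below split(2) change] split(1)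
      by (simp add: sign_changes_from_0)
    moreover have "sorted_wrt (\<ge>) (map snd ys)"
      using sorted by (simp add: ys_def xs\<mu>_def sorted_wrt_map)
    moreover have "(\<forall>t. exp_sum ys t = 0) \<longrightarrow> (\<forall>t. exp_sum xs t = 0)"
    proof (intro impI allI)
      fix t assume "\<forall>t. exp_sum ys t = 0"
      obtain z where "z \<in> Z" using Z(2) by blast
      have "\<forall>x. (exp_sum xs\<mu> has_real_derivative 0) (at x)"
        using has_real_derivative_exp_sum[of xs\<mu>] \<open>\<forall>t. exp_sum ys t = 0\<close> ys_def by simp
      then have "exp_sum xs\<mu> t = exp_sum xs\<mu> z" by (rule DERIV_isconst_all)
      then show "exp_sum xs t = 0"
        using zeros \<open>z \<in> Z\<close> exp_sum_shift[of xs t \<mu>] xs\<mu>_def by simp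
    qed
    ultimately show thesis using Z' N by (intro that[of ys Z']) (auto simp: ys_def xs\<mu>_def)
  qed
qed

theorem exp_sum_descartes:
  assumes "sorted_wrt (\<ge>) (map snd xs)" "finite Z"
    and "sign_changes (map fst xs) < card Z" "\<forall>z\<in>Z. exp_sum xs z = 0"
  shows "exp_sum xs t = 0"
  using assms
proof (induction "length xs + sign_changes (map fst xs)" arbitrary: xs Z t rule: less_induct)
  case less
  then obtain z where "z \<in> Z" by (metis card.empty ex_in_conv less_nat_zero_code)
  show ?case
  proof (cases "sign_changes (map fst xs) = 0")
    case True
    then obtain s where "s \<noteq> 0" "\<forall>c\<in>set (map fst xs). 0 \<le> s * c"
      using sign_changes_eq_0_same_sign by blast
    then show ?thesis using exp_sum_eq_0_if_same_sign less.prems(4) \<open>z \<in> Z\<close> by blast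
  next
    case False
    have "Z \<noteq> {}" using \<open>z \<in> Z\<close> by blast
    obtain ys Z' where ys: "sorted_wrt (\<ge>) (map snd ys)"
      "length ys + sign_changes (map fst ys) < length xs + sign_changes (map fst xs)"
      "sign_changes (map fst ys) + card Z \<le> sign_changes (map fst xs) + card Z'"
      "finite Z'" "\<forall>z\<in>Z'. exp_sum ys z = 0" "(\<forall>t. exp_sum ys t = 0) \<longrightarrow> (\<forall>t. exp_sum xs t = 0)"
      by (rule exp_sum_descartes_step[OF less.prems(1) False less.prems(2) \<open>Z \<noteq> {}\<close> less.prems(4)])
    have "sign_changes (map fst ys) < card Z'" using ys(3) less.prems(3) by linarith
    then have "\<forall>t. exp_sum ys t = 0" using less.hyps[OF ys(2) ys(1) ys(4) _ ys(5)] by blast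
    then show ?thesis using ys(6) by blast
  qed
qed

section \<open>Negative components of an exponential sum\<close>

lemma map_snd_list_update_fst:
  "k < length xs \<Longrightarrow> map snd (xs[k := (c, snd (xs ! k))]) = map snd xs"
  by (simp add: map_update list_update_same_conv)

lemma exp_sum_perturb_append:
  assumes sorted: "sorted_wrt (\<ge>) (map snd xs)" and k: "k < length xs"
    and \<epsilon>: "0 < \<epsilon>" "\<epsilon> < \<bar>fst (xs ! k)\<bar>"
    and last: "last_nonzero 0 (map fst xs) \<le> 0" and \<nu>: "\<forall>p\<in>set xs. \<nu> < snd p"
  defines "ys \<equiv> xs[k := (fst (xs ! k) + \<epsilon>, snd (xs ! k))] @ [(- \<epsilon>, \<nu>)]"
  shows "sorted_wrt (\<ge>) (map snd ys)"
    and "exp_sum ys t = exp_sum xs t + \<epsilon> * (exp (snd (xs ! k) * t) - exp (\<nu> * t))"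
    and "sign_changes (map fst ys) = sign_changes (map fst xs)"
proof -
  show "sorted_wrt (\<ge>) (map snd ys)"
    using sorted \<nu> k by (auto simp: ys_def map_snd_list_update_fst sorted_wrt_append less_imp_le)
  show "exp_sum ys t = exp_sum xs t + \<epsilon> * (exp (snd (xs ! k) * t) - exp (\<nu> * t))"
    using k by (simp add: ys_def exp_sum_list_update algebra_simps)
  define cs' where "cs' = (map fst xs)[k := fst (xs ! k) + \<epsilon>]"
  have same: "same_signs cs' (map fst xs)"
    using k \<epsilon> unfolding cs'_def by (intro same_signs_list_update) (auto simp: sgn_if)
  then have "last_nonzero 0 cs' \<le> 0"
    using last_nonzero_same_signs[OF same, of 0 0] last by (auto simp: sgn_if split: if_splits)
  then have "sign_changes_from 0 (cs' @ [- \<epsilon>]) = sign_changes_from 0 (map fst xs)"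
    using sign_changes_from_append_opposite \<epsilon>(1) sign_changes_from_same_signs[OF same] by simp
  then show "sign_changes (map fst ys) = sign_changes (map fst xs)"
    by (simp add: ys_def cs'_def map_update sign_changes_from_0)
qed

lemma exp_sum_perturb_Cons:
  assumes sorted: "sorted_wrt (\<ge>) (map snd xs)" and k: "k < length xs"
    and \<epsilon>: "0 < \<epsilon>" "\<epsilon> < \<bar>fst (xs ! k)\<bar>"
    and last: "0 < last_nonzero 0 (map fst xs)" and M: "\<forall>p\<in>set xs. snd p < M"
  defines "ys \<equiv> (\<epsilon>, M) # xs[k := (fst (xs ! k) - \<epsilon>, snd (xs ! k))]"
  shows "sorted_wrt (\<ge>) (map snd ys)"
    and "exp_sum ys t = exp_sum xs t + \<epsilon> * (exp (M * t) - exp (snd (xs ! k) * t))"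
    and "sign_changes (map fst ys) \<le> 2 * ((sign_changes (map fst xs) + 1) div 2)"
proof -
  show "sorted_wrt (\<ge>) (map snd ys)"
    using sorted M k by (auto simp: ys_def map_snd_list_update_fst less_imp_le)
  show "exp_sum ys t = exp_sum xs t + \<epsilon> * (exp (M * t) - exp (snd (xs ! k) * t))"
    using k by (simp add: ys_def exp_sum_list_update algebra_simps)
  define cs' where "cs' = (map fst xs)[k := fst (xs ! k) - \<epsilon>]"
  have same: "same_signs cs' (map fst xs)"
    using k \<epsilon> unfolding cs'_def by (intro same_signs_list_update) (auto simp: sgn_if)
  then have pos: "0 < last_nonzero 0 cs'"
    using last_nonzero_same_signs[OF same, of 0 0] last by (auto simp: sgn_if split: if_splits)
  have "sign_changes_from 0 (\<epsilon> # cs') \<le> 2 * ((sign_changes_from 0 (map fst xs) + 1) div 2)"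
    using sign_changes_from_Cons_positive[OF pos \<epsilon>(1)] sign_changes_from_same_signs[OF same, of 0 0]
    by simp
  then show "sign_changes (map fst ys) \<le> 2 * ((sign_changes (map fst xs) + 1) div 2)"
    unfolding sign_changes_from_0[symmetric] by (simp add: ys_def cs'_def map_update)
qed

lemma le_two_mult_Suc_div_2: "(n::nat) \<le> 2 * ((n + 1) div 2)"
  by presburger

text \<open>The perturbation moves weight \<open>\<epsilon>\<close> from the \<open>k\<close>-th term to a new exponent outside the range
  of the old ones: below all of them, with negative coefficient, when the last nonzero coefficient
  is \<open>\<le> 0\<close>; above all of them, with positive coefficient, otherwise. In the second case a sign
  change is added only if the first and last nonzero coefficients have opposite signs, i.e. only
  if the count was odd.\<close>

lemma exp_sum_perturbation:
  assumes sorted: "sorted_wrt (\<ge>) (map snd xs)" and k: "k < length xs"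
  obtains h where "h 0 = 0" "\<And>t. 0 < t \<Longrightarrow> 0 < h t"
    "\<And>\<epsilon>. 0 < \<epsilon> \<Longrightarrow> \<epsilon> < \<bar>fst (xs ! k)\<bar> \<Longrightarrow> \<exists>ys. sorted_wrt (\<ge>) (map snd ys) \<and>
       (\<forall>t. exp_sum ys t = exp_sum xs t + \<epsilon> * h t) \<and>
       sign_changes (map fst ys) \<le> 2 * ((sign_changes (map fst xs) + 1) div 2)"
proof (cases "last_nonzero 0 (map fst xs) \<le> 0")
  case True
  define \<nu> where "\<nu> = Min (snd ` set xs) - 1"
  have \<nu>: "\<forall>p\<in>set xs. \<nu> < snd p"
    using Min_le[of "snd ` set xs"] by (fastforce simp: \<nu>_def)
  then have "\<nu> < snd (xs ! k)" using k by simp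
  then show thesis
  proof (intro that[of "\<lambda>t. exp (snd (xs ! k) * t) - exp (\<nu> * t)"])
    fix \<epsilon> :: real assume "0 < \<epsilon>" "\<epsilon> < \<bar>fst (xs ! k)\<bar>"
    then show "\<exists>ys. sorted_wrt (\<ge>) (map snd ys) \<and>
      (\<forall>t. exp_sum ys t = exp_sum xs t + \<epsilon> * (exp (snd (xs ! k) * t) - exp (\<nu> * t))) \<and>
      sign_changes (map fst ys) \<le> 2 * ((sign_changes (map fst xs) + 1) div 2)"
      using exp_sum_perturb_append[OF sorted k _ _ True \<nu>] le_two_mult_Suc_div_2
      by (intro exI[of _ "xs[k := (fst (xs ! k) + \<epsilon>, snd (xs ! k))] @ [(- \<epsilon>, \<nu>)]"]) auto
  qed auto
next
  case False
  define M where "M = Max (snd ` set xs) + 1"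
  have M: "\<forall>p\<in>set xs. snd p < M"
    using Max_ge[of "snd ` set xs"] by (fastforce simp: M_def)
  then have "snd (xs ! k) < M" using k by simp
  then show thesis
  proof (intro that[of "\<lambda>t. exp (M * t) - exp (snd (xs ! k) * t)"])
    fix \<epsilon> :: real assume "0 < \<epsilon>" "\<epsilon> < \<bar>fst (xs ! k)\<bar>"
    then show "\<exists>ys. sorted_wrt (\<ge>) (map snd ys) \<and>
      (\<forall>t. exp_sum ys t = exp_sum xs t + \<epsilon> * (exp (M * t) - exp (snd (xs ! k) * t))) \<and>
      sign_changes (map fst ys) \<le> 2 * ((sign_changes (map fst xs) + 1) div 2)"
      using exp_sum_perturb_Cons[OF sorted k _ _ _ M] False
      by (intro exI[of _ "(\<epsilon>, M) # xs[k := (fst (xs ! k) - \<epsilon>, snd (xs ! k))]"]) auto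
  qed auto
qed

lemma small_perturbation_stays_negative:
  fixes f h :: "real \<Rightarrow> real"
  assumes "finite P" "\<forall>p\<in>P. f p < 0" "0 < \<delta>"
  obtains \<epsilon> where "0 < \<epsilon>" "\<epsilon> < \<delta>" "\<forall>p\<in>P. f p + \<epsilon> * h p < 0"
proof -
  have "\<forall>\<^sub>F \<epsilon> in at_right 0. \<forall>p\<in>P. f p + \<epsilon> * h p < 0"
  proof (rule eventually_ball_finite[OF assms(1)], rule ballI)
    fix p assume "p \<in> P"
    have "((\<lambda>\<epsilon>. f p + \<epsilon> * h p) \<longlongrightarrow> f p + 0 * h p) (at_right 0)" by (intro tendsto_intros)
    then show "\<forall>\<^sub>F \<epsilon> in at_right 0. f p + \<epsilon> * h p < 0"
      using assms(2) \<open>p \<in> P\<close> by (auto dest: order_tendstoD(2))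
  qed
  moreover have "\<forall>\<^sub>F \<epsilon> in at_right 0. \<epsilon> \<in> {0<..<\<delta>}" using assms(3) by (rule eventually_at_right_real)
  ultimately have "\<forall>\<^sub>F \<epsilon> in at_right 0. \<epsilon> \<in> {0<..<\<delta>} \<and> (\<forall>p\<in>P. f p + \<epsilon> * h p < 0)"
    by eventually_elim blast
  then show thesis using that eventually_happens'[OF trivial_limit_at_right_real] by force
qed

lemma zeros_between_alternating_signs:
  fixes g :: "real \<Rightarrow> real"
  assumes cont: "continuous_on UNIV g"
  shows "finite P \<Longrightarrow> card P = m \<Longrightarrow> \<forall>p\<in>P. g p < 0 \<and> a < p \<and> p < K \<Longrightarrow> 0 < g a \<Longrightarrow> 0 < g K \<Longrightarrow>
    \<forall>p\<in>P. \<forall>q\<in>P. p < q \<longrightarrow> (\<exists>r. p < r \<and> r < q \<and> 0 < g r) \<Longrightarrow>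
    \<exists>Z. finite Z \<and> card Z = 2 * m \<and> Z \<subseteq> {a<..<K} \<and> (\<forall>z\<in>Z. g z = 0)"
proof (induction m arbitrary: P K)
  case 0
  then show ?case by (intro exI[of _ "{}"]) auto
next
  case (Suc m)
  define q where "q = Max P"
  define P0 where "P0 = P - {q}"
  have "q \<in> P" using Suc.prems(1,2) q_def by (metis Max_in card.empty nat.distinct(1))
  then have P0: "finite P0" "card P0 = m" and below_q: "\<forall>p\<in>P0. p < q"
    using Suc.prems(1,2) by (auto simp: P0_def q_def less_le)
  have q: "g q < 0" "a < q" "q < K" using \<open>q \<in> P\<close> Suc.prems(3) by auto
  obtain r where r: "a \<le> r" "r < q" "0 < g r" "\<forall>p\<in>P0. p < r"
  proof (cases "P0 = {}")
    case True
    then show thesis using that[of a] q Suc.prems(4) by auto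
  next
    case False
    define p where "p = Max P0"
    have "p \<in> P0" using P0(1) False p_def by simp
    then obtain r where "p < r" "r < q" "0 < g r"
      using Suc.prems(6) below_q P0_def \<open>q \<in> P\<close> by blast
    moreover have "\<forall>p'\<in>P0. p' < r" using \<open>p < r\<close> P0(1) p_def by (meson Max_ge le_less_trans)
    moreover have "a < p" using \<open>p \<in> P0\<close> P0_def Suc.prems(3) by auto
    ultimately show thesis using that[of r] by auto
  qed
  have "\<exists>Z. finite Z \<and> card Z = 2 * m \<and> Z \<subseteq> {a<..<r} \<and> (\<forall>z\<in>Z. g z = 0)"
    using Suc.IH[OF P0, of r] Suc.prems r by (auto simp: P0_def)
  then obtain Z where Z: "finite Z" "card Z = 2 * m" "Z \<subseteq> {a<..<r}" "\<forall>z\<in>Z. g z = 0"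
    by blast
  have c: "continuous_on {x..y} g" for x y using cont continuous_on_subset by blast
  obtain z1 where z1: "r \<le> z1" "z1 \<le> q" "g z1 = 0"
    using IVT2'[of g q 0 r, OF _ _ _ c] q r by auto
  obtain z2 where z2: "q \<le> z2" "z2 \<le> K" "g z2 = 0"
    using IVT'[of g q 0 K, OF _ _ _ c] q Suc.prems(5) by auto
  have "r < z1" "z1 < q" "q < z2" "z2 < K" using z1 z2 q r Suc.prems(5) by (auto simp: less_le)
  moreover have "z1 \<notin> Z" "z2 \<notin> Z" using Z(3) calculation by auto
  ultimately show ?case
    using Z z1 z2 r q by (intro exI[of _ "insert z1 (insert z2 Z)"]) auto
qed

lemma components_gap:
  fixes S :: "real set"
  assumes C: "C \<in> components S" and C': "C' \<in> components S" and "C \<noteq> C'"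
    and "p \<in> C" "q \<in> C'" "p < q"
  obtains r where "p < r" "r < q" "r \<notin> S"
proof (rule ccontr)
  assume "\<not> thesis"
  then have "{p..q} \<subseteq> S"
    using that \<open>p \<in> C\<close> \<open>q \<in> C'\<close> C C' in_components_subset by (fastforce simp: less_le)
  then have "{p..q} \<subseteq> C"
    by (rule components_maximal[OF C connected_Icc]) (use \<open>p \<in> C\<close> \<open>p < q\<close> in auto)
  then have "q \<in> C \<inter> C'" using \<open>q \<in> C'\<close> \<open>p < q\<close> by auto
  then show False using components_nonoverlap[OF C C'] \<open>C \<noteq> C'\<close> by auto
qed

lemma components_representatives:
  fixes S :: "real set"
  assumes F: "F \<subseteq> components S" "finite F"
  obtains P where "finite P" "card P = card F" "P \<subseteq> S"
    "\<And>p q. p \<in> P \<Longrightarrow> q \<in> P \<Longrightarrow> p < q \<Longrightarrow> \<exists>r. p < r \<and> r < q \<and> r \<notin> S"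
proof -
  define pt where "pt C = (SOME x. x \<in> C)" for C :: "real set"
  have pt: "pt C \<in> C" if "C \<in> F" for C
  proof -
    have "C \<noteq> {}" using that F(1) in_components_nonempty by blast
    then show ?thesis unfolding pt_def by (simp add: some_in_eq)
  qed
  have "inj_on pt F"
  proof (rule inj_onI)
    fix C C' assume "C \<in> F" "C' \<in> F" "pt C = pt C'"
    then have "pt C \<in> C \<inter> C'" using pt[OF \<open>C \<in> F\<close>] pt[OF \<open>C' \<in> F\<close>] by simp
    then show "C = C'" using components_nonoverlap[of C S C'] F \<open>C \<in> F\<close> \<open>C' \<in> F\<close> by blast
  qed
  moreover have "\<exists>r. p < r \<and> r < q \<and> r \<notin> S" if pq: "p \<in> pt ` F" "q \<in> pt ` F" "p < q" for p q
  proof -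
    obtain C C' where C: "C \<in> F" "C' \<in> F" "p = pt C" "q = pt C'" using pq by blast
    then have "C \<noteq> C'" using \<open>p < q\<close> by auto
    moreover have "C \<in> components S" "C' \<in> components S" "p \<in> C" "q \<in> C'"
      using C F pt by auto
    ultimately obtain r where "p < r" "r < q" "r \<notin> S"
      using components_gap[of C S C' p q] \<open>p < q\<close> by blast
    then show ?thesis by blast
  qed
  moreover have "pt ` F \<subseteq> S" using pt F in_components_subset by blast
  ultimately show thesis using that[of "pt ` F"] F by (simp add: card_image)
qed

lemma Suc_double_le_round_up_even_imp:
  "2 * c + 1 \<le> v \<Longrightarrow> v \<le> 2 * ((w + 1) div 2) \<Longrightarrow> (c::nat) \<le> (w - 1) div 2"
  by presburger

lemma exp_sum_perturbation_negative_on: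
  assumes sorted: "sorted_wrt (\<ge>) (map snd xs)"
    and P: "finite P" "P \<noteq> {}" "\<forall>p\<in>P. exp_sum xs p < 0"
  obtains ys where "sorted_wrt (\<ge>) (map snd ys)"
    "sign_changes (map fst ys) \<le> 2 * ((sign_changes (map fst xs) + 1) div 2)"
    "exp_sum ys 0 = exp_sum xs 0" "\<And>t. 0 < t \<Longrightarrow> exp_sum xs t < exp_sum ys t"
    "\<forall>p\<in>P. exp_sum ys p < 0"
proof -
  have "\<exists>p\<in>set xs. fst p \<noteq> 0" using P(2,3) exp_sum_zero_coeffs by fastforce
  then obtain k where k: "k < length xs" "fst (xs ! k) \<noteq> 0" by (auto simp: in_set_conv_nth)
  obtain h where h: "h 0 = 0" "\<And>t. 0 < t \<Longrightarrow> 0 < h t"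
    and perturb: "\<And>\<epsilon>. 0 < \<epsilon> \<Longrightarrow> \<epsilon> < \<bar>fst (xs ! k)\<bar> \<Longrightarrow> \<exists>ys. sorted_wrt (\<ge>) (map snd ys) \<and>
       (\<forall>t. exp_sum ys t = exp_sum xs t + \<epsilon> * h t) \<and>
       sign_changes (map fst ys) \<le> 2 * ((sign_changes (map fst xs) + 1) div 2)"
    using exp_sum_perturbation[OF sorted k(1)] by blast
  have "0 < \<bar>fst (xs ! k)\<bar>" using k(2) by simp
  then obtain \<epsilon> where \<epsilon>: "0 < \<epsilon>" "\<epsilon> < \<bar>fst (xs ! k)\<bar>" "\<forall>p\<in>P. exp_sum xs p + \<epsilon> * h p < 0"
    using small_perturbation_stays_negative[OF P(1) P(3), where h = h] by blast
  obtain ys where ys: "sorted_wrt (\<ge>) (map snd ys)" "\<forall>t. exp_sum ys t = exp_sum xs t + \<epsilon> * h t"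
      "sign_changes (map fst ys) \<le> 2 * ((sign_changes (map fst xs) + 1) div 2)"
    using perturb[OF \<epsilon>(1,2)] by blast
  show thesis
  proof (rule that[OF ys(1,3)])
    show "exp_sum ys 0 = exp_sum xs 0" using ys(2) h(1) by simp
    show "exp_sum xs t < exp_sum ys t" if "0 < t" for t using ys(2) h(2)[OF that] \<epsilon>(1) by simp
    show "\<forall>p\<in>P. exp_sum ys p < 0" using ys(2) \<epsilon>(3) by simp
  qed
qed

lemma card_negative_components_exp_sum:
  assumes sorted: "sorted_wrt (\<ge>) (map snd xs)"
    and at_0: "exp_sum xs 0 = 0"
    and at_nat: "\<And>m::nat. 1 \<le> m \<Longrightarrow> 0 \<le> exp_sum xs (real m)"
    and F: "F \<subseteq> components {t. 1 < t \<and> exp_sum xs t < 0}" "finite F"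
  shows "card F \<le> (sign_changes (map fst xs) - 1) div 2"
proof (cases "F = {}")
  case False
  define S where "S = {t. 1 < t \<and> exp_sum xs t < 0}"
  obtain P where P: "finite P" "card P = card F" "P \<subseteq> S"
    and gaps: "\<And>p q. p \<in> P \<Longrightarrow> q \<in> P \<Longrightarrow> p < q \<Longrightarrow> \<exists>r. p < r \<and> r < q \<and> r \<notin> S"
    using components_representatives[OF F[folded S_def]] by blast
  have "P \<noteq> {}" using P(2) False F(2) by auto
  moreover have "\<forall>p\<in>P. exp_sum xs p < 0" using P(3) by (auto simp: S_def)
  ultimately obtain ys where ys: "sorted_wrt (\<ge>) (map snd ys)"
      "sign_changes (map fst ys) \<le> 2 * ((sign_changes (map fst xs) + 1) div 2)"
      "exp_sum ys 0 = 0" "\<And>t. 0 < t \<Longrightarrow> exp_sum xs t < exp_sum ys t" "\<forall>p\<in>P. exp_sum ys p < 0"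
    using exp_sum_perturbation_negative_on[OF sorted P(1)] at_0 by metis
  have pos: "0 < exp_sum ys t" if "1 \<le> t" "t \<notin> S" for t
  proof -
    have "0 \<le> exp_sum xs t" using that at_nat[of 1] by (cases "t = 1") (auto simp: S_def)
    then show ?thesis using ys(4)[of t] that(1) by simp
  qed
  define K where "K = real (nat \<lceil>Max P\<rceil> + 1)"
  have "\<forall>p\<in>P. exp_sum ys p < 0 \<and> 1 < p \<and> p < K"
  proof
    fix p assume "p \<in> P"
    then have "p \<le> Max P" using P(1) by simp
    then have "p < K" unfolding K_def by linarith
    then show "exp_sum ys p < 0 \<and> 1 < p \<and> p < K" using \<open>p \<in> P\<close> ys(5) P(3) by (auto simp: S_def)
  qed
  moreover have "0 < exp_sum ys 1" using pos by (simp add: S_def)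
  moreover have "0 < exp_sum ys K" using pos at_nat[of "nat \<lceil>Max P\<rceil> + 1"] by (simp add: K_def S_def)
  moreover have "\<forall>p\<in>P. \<forall>q\<in>P. p < q \<longrightarrow> (\<exists>r. p < r \<and> r < q \<and> 0 < exp_sum ys r)"
  proof (intro ballI impI)
    fix p q assume "p \<in> P" "q \<in> P" "p < q"
    then obtain r where "p < r" "r < q" "r \<notin> S" using gaps by blast
    moreover have "1 \<le> r" using \<open>p \<in> P\<close> P(3) \<open>p < r\<close> by (auto simp: S_def)
    ultimately show "\<exists>r. p < r \<and> r < q \<and> 0 < exp_sum ys r" using pos by blast
  qed
  ultimately have "\<exists>Z. finite Z \<and> card Z = 2 * card F \<and> Z \<subseteq> {1<..<K} \<and> (\<forall>z\<in>Z. exp_sum ys z = 0)"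
    by (rule zeros_between_alternating_signs[OF continuous_on_exp_sum P(1,2)])
  then obtain Z where Z: "finite Z" "card Z = 2 * card F" "Z \<subseteq> {1<..<K}" "\<forall>z\<in>Z. exp_sum ys z = 0"
    by blast
  have "0 \<notin> Z" using Z(3) by auto
  then have "card (insert 0 Z) = 2 * card F + 1" using Z(1,2) by simp
  moreover have "\<not> sign_changes (map fst ys) < card (insert 0 Z)"
  proof
    assume less: "sign_changes (map fst ys) < card (insert 0 Z)"
    have zeros: "\<forall>z\<in>insert 0 Z. exp_sum ys z = 0" using Z(4) ys(3) by simp
    have "exp_sum ys 1 = 0" by (rule exp_sum_descartes[OF ys(1) _ less zeros]) (use Z(1) in simp)
    then show False using pos[of 1] by (simp add: S_def)
  qed
  ultimately have "2 * card F + 1 \<le> sign_changes (map fst ys)" by simp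
  then show ?thesis using ys(2) by (rule Suc_double_le_round_up_even_imp)
qed simp

lemma negative_components_exp_sum:
  assumes "sorted_wrt (\<ge>) (map snd xs)" "exp_sum xs 0 = 0"
    and "\<And>m::nat. 1 \<le> m \<Longrightarrow> 0 \<le> exp_sum xs (real m)"
  shows "finite (components {t. 1 < t \<and> exp_sum xs t < 0}) \<and>
    card (components {t. 1 < t \<and> exp_sum xs t < 0}) \<le> (sign_changes (map fst xs) - 1) div 2"
  using card_negative_components_exp_sum[OF assms] by (rule finite_if_finite_subsets_card_bdd)

section \<open>Powers of a doubly nonnegative matrix\<close>

lemma orthogonal_eigenvector:
  assumes orth: "orthogonal_matrix n U"
    and decomp: "\<forall>a<n. \<forall>b<n. A a b = (\<Sum>k<n. U a k * lam k * U b k)"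
    and "a < n" "k < n"
  shows "(\<Sum>l<n. A a l * U l k) = U a k * lam k"
proof -
  have "(\<Sum>l<n. A a l * U l k) = (\<Sum>l<n. \<Sum>k'<n. U a k' * lam k' * (U l k' * U l k))"
    using decomp \<open>a < n\<close> by (simp add: sum_distrib_right mult.assoc)
  also have "\<dots> = (\<Sum>k'<n. U a k' * lam k' * (\<Sum>l<n. U l k' * U l k))"
    by (subst sum.swap) (simp add: sum_distrib_left)
  also have "\<dots> = (\<Sum>k'<n. if k' = k then U a k' * lam k' else 0)"
    by (rule sum.cong) (use orth \<open>k < n\<close> in \<open>auto simp: orthogonal_matrix_def\<close>)
  also have "\<dots> = U a k * lam k" using \<open>k < n\<close> by simp
  finally show ?thesis .
qed

lemma eigenvalue_pos:
  assumes dnn: "doubly_nonnegative n A" and inv: "invertible_matrix n A"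
    and orth: "orthogonal_matrix n U"
    and decomp: "\<forall>a<n. \<forall>b<n. A a b = (\<Sum>k<n. U a k * lam k * U b k)"
    and k: "k < n"
  shows "0 < lam k"
proof -
  have eigen: "(\<Sum>l<n. A a l * U l k) = U a k * lam k" if "a < n" for a
    using orthogonal_eigenvector[OF orth decomp that k] .
  have unit: "(\<Sum>a<n. U a k * U a k) = 1" using orth k by (simp add: orthogonal_matrix_def)
  have "(\<Sum>a<n. \<Sum>b<n. U a k * A a b * U b k) = (\<Sum>a<n. U a k * (\<Sum>b<n. A a b * U b k))"
    by (simp add: sum_distrib_left mult.assoc)
  also have "\<dots> = lam k * (\<Sum>a<n. U a k * U a k)"
    by (simp add: eigen sum_distrib_left algebra_simps)
  finally have "(\<Sum>a<n. \<Sum>b<n. U a k * A a b * U b k) = lam k" using unit by simp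
  moreover have "\<forall>x. 0 \<le> (\<Sum>a<n. \<Sum>b<n. x a * A a b * x b)"
    using dnn by (simp add: doubly_nonnegative_def psd_matrix_def)
  ultimately have "0 \<le> lam k" by (metis (no_types))
  moreover have "lam k \<noteq> 0"
  proof
    assume "lam k = 0"
    obtain B where B: "\<forall>i<n. \<forall>j<n. mat_mult n B A i j = (if i = j then 1 else 0)"
      using inv unfolding invertible_matrix_def by blast
    \<comment> \<open>column \<open>k\<close> of \<open>U\<close> lies in the kernel of the invertible \<open>A\<close>\<close>
    have "U c k = 0" if c: "c < n" for c
    proof -
      have "U c k = (\<Sum>b<n. if b = c then U b k else 0)" using c by simp
      also have "\<dots> = (\<Sum>b<n. (\<Sum>a<n. B c a * A a b) * U b k)"
        by (rule sum.cong) (use B c in \<open>auto simp: mat_mult_def\<close>)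
      also have "\<dots> = (\<Sum>a<n. B c a * (\<Sum>b<n. A a b * U b k))"
        by (simp add: sum_distrib_left sum_distrib_right algebra_simps) (rule sum.swap)
      also have "\<dots> = 0" using eigen \<open>lam k = 0\<close> by simp
      finally show ?thesis .
    qed
    then show False using unit by simp
  qed
  ultimately show ?thesis by simp
qed

lemma mat_real_power_entry_add_1:
  assumes orth: "orthogonal_matrix n U"
    and decomp: "\<forall>a<n. \<forall>b<n. A a b = (\<Sum>k<n. U a k * lam k * U b k)"
    and pos: "\<forall>k<n. 0 < lam k" and "a < n"
  shows "mat_real_power_entry n U lam (t + 1) a b = (\<Sum>l<n. A a l * mat_real_power_entry n U lam t l b)"
proof -
  have "(\<Sum>l<n. A a l * mat_real_power_entry n U lam t l b)
      = (\<Sum>k<n. (\<Sum>l<n. A a l * U l k) * U b k * lam k powr t)"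
    by (simp add: mat_real_power_entry_def sum_distrib_left sum_distrib_right algebra_simps)
      (rule sum.swap)
  also have "\<dots> = (\<Sum>k<n. U a k * U b k * lam k powr (t + 1))"
    using pos by (intro sum.cong) (simp_all add: orthogonal_eigenvector[OF orth decomp \<open>a < n\<close>] powr_add
        abs_of_pos)
  finally show ?thesis by (simp add: mat_real_power_entry_def)
qed

lemma mat_real_power_entry_nat_nonneg:
  assumes dnn: "doubly_nonnegative n A" and orth: "orthogonal_matrix n U"
    and decomp: "\<forall>a<n. \<forall>b<n. A a b = (\<Sum>k<n. U a k * lam k * U b k)"
    and pos: "\<forall>k<n. 0 < lam k"
  shows "1 \<le> m \<Longrightarrow> a < n \<Longrightarrow> b < n \<Longrightarrow> 0 \<le> mat_real_power_entry n U lam (real m) a b"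
proof (induction m arbitrary: a rule: nat_induct_at_least)
  case base
  have "mat_real_power_entry n U lam 1 a b = A a b"
    using decomp base pos by (simp add: mat_real_power_entry_def algebra_simps abs_of_pos)
  then show ?case using dnn base by (simp add: doubly_nonnegative_def entrywise_nonneg_def)
next
  case (Suc m)
  have "0 \<le> (\<Sum>l<n. A a l * mat_real_power_entry n U lam (real m) l b)"
    using Suc dnn by (intro sum_nonneg mult_nonneg_nonneg)
      (auto simp: doubly_nonnegative_def entrywise_nonneg_def)
  then show ?case
    using mat_real_power_entry_add_1[OF orth decomp pos \<open>a < n\<close>, of "real m"] by (simp add: add.commute)
qed

lemma mat_real_power_entry_eq_exp_sum:
  assumes "\<forall>k<n. 0 < lam k"
  shows "mat_real_power_entry n U lam t i j = exp_sum (map (\<lambda>k. (U i k * U j k, ln (lam k))) [0..<n]) t"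
proof -
  have "lam k powr t = exp (ln (lam k) * t)" if "k < n" for k
    using assms[rule_format, OF that] by (simp add: powr_def mult.commute)
  then show ?thesis
    by (simp add: mat_real_power_entry_def exp_sum_def interv_sum_list_conv_sum_set_nat atLeast0LessThan)
qed

theorem lemma2p4:
  fixes n :: nat and A U :: "nat \<Rightarrow> nat \<Rightarrow> real" and lam :: "nat \<Rightarrow> real" and i j :: nat
  assumes dnn: "doubly_nonnegative n A"
    and inv: "invertible_matrix n A"
    and orth: "orthogonal_matrix n U"
    and decomp: "\<forall>a<n. \<forall>b<n. A a b = (\<Sum>k<n. U a k * lam k * U b k)"
    and sorted: "\<forall>k l. k \<le> l \<longrightarrow> l < n \<longrightarrow> lam l \<le> lam k"
    and ij: "i < n" "j < n"
  shows "finite (components {t::real. t > 1 \<and> mat_real_power_entry n U lam t i j < 0}) \<and>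
         card (components {t::real. t > 1 \<and> mat_real_power_entry n U lam t i j < 0})
           \<le> (if sign_change_entry n U i j > 0 then (sign_change_entry n U i j - 1) div 2 else 0)"
proof (cases "i = j")
  case True
  then have "0 \<le> mat_real_power_entry n U lam t i j" for t
    by (simp add: mat_real_power_entry_def sum_nonneg)
  then have empty: "{t. 1 < t \<and> mat_real_power_entry n U lam t i j < 0} = {}" by (simp add: not_less)
  show ?thesis unfolding empty by simp
next
  case False
  have pos: "\<forall>k<n. 0 < lam k" using eigenvalue_pos[OF dnn inv orth decomp] by blast
  define xs where "xs = map (\<lambda>k. (U i k * U j k, ln (lam k))) [0..<n]"
  have entry: "mat_real_power_entry n U lam t i j = exp_sum xs t" for t
    unfolding xs_def by (rule mat_real_power_entry_eq_exp_sum[OF pos])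
  have "finite (components {t. 1 < t \<and> exp_sum xs t < 0}) \<and>
      card (components {t. 1 < t \<and> exp_sum xs t < 0}) \<le> (sign_changes (map fst xs) - 1) div 2"
  proof (rule negative_components_exp_sum)
    show "sorted_wrt (\<ge>) (map snd xs)"
      using sorted pos by (auto simp: xs_def sorted_wrt_iff_nth_less)
    show "exp_sum xs 0 = 0"
      using orth ij False by (simp add: exp_sum_at_0 xs_def o_def interv_sum_list_conv_sum_set_nat
          atLeast0LessThan orthogonal_matrix_def)
    show "0 \<le> exp_sum xs (real m)" if "1 \<le> m" for m
      using mat_real_power_entry_nat_nonneg[OF dnn orth decomp pos that ij] entry by simp
  qed
  moreover have "sign_change_entry n U i j = sign_changes (map fst xs)"
    by (simp add: sign_change_entry_def xs_def o_def)
  ultimately show ?thesis by (auto simp: entry)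
qed

end
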